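(* Let $\mathcal{P}$ be a polyomino with toric ideal $J_{\mathcal{P}}\subset S$, and let $f=f^+-f^-\in J_{\mathcal{P}}$ be a binomial of degree $\ge 3$, with $V_+=\{v\in V(\mathcal{P}): x_v\mid f^+\}$ and $V_-=\{v\in V(\mathcal{P}): x_v\mid f^-\}$. If there exist $p,q\in V_+$ and $r\in V_-$ such that $p,q$ are the diagonal (resp. anti-diagonal) corners of an inner interval of $\mathcal{P}$ and $r$ is one of the anti-diagonal (resp. diagonal) corners of that interval, then $f$ is redundant in $J_{\mathcal{P}}$.
   Context: For $a\in\mathbb{N}^2$ the cell $[a,a+(1,1)]$ has vertices $a,a+(1,0),a+(0,1),a+(1,1)$ and four edges. A polyomino $\mathcal{P}$ is a finite nonempty set of cells such that any two cells are joined by a sequence of cells of $\mathcal{P}$, consecutive ones sharing an edge. $V(\mathcal{P})$ is the union of vertex sets of its cells; $S=\mathbb{K}[x_v\mid v\in V(\mathcal{P})]$, $\mathbb{K}$ a field, standard graded. For $a=(i,j)$, $b=(k,\ell)$, $i<k$, $j<\ell$, $[a,b]$ has diagonal corners $a,b$ and anti-diagonal corners $(i,\ell),(k,j)$; it is an inner interval if all its cells belong to $\mathcal{P}$. Toric ideal: a hole of $\mathcal{P}$ is a finite nonempty set of cells not in $\mathcal{P}$, connected through paths of its own cells (consecutive cells sharing an edge), maximal with these properties. Order $\mathbb{N}^2$ by $(a_1,a_2)<(b_1,b_2)$ iff $a_1<b_1$ or ($a_1=b_1$ and $a_2<b_2$); the lower left corner of a hole is its minimal vertex. Let $\mathcal{H}_1,\dots,\mathcal{H}_r$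 be the holes with lower left corners $(i_k,j_k)$ and $\mathcal{F}_k=\{(i,j)\in V(\mathcal{P}): i\le i_k, j\le j_k\}$. A horizontal edge interval is a set $\{(t,j):i\le t\le k\}$ such that each $\{(t,j),(t+1,j)\}$, $i\le t<k$, is an edge of a cell of $\mathcal{P}$; maximal if not strictly contained in another; vertical ones analogously. Each $a\in V(\mathcal{P})$ lies in a unique maximal horizontal edge interval $H(a)$ and unique maximal vertical one $V(a)$. With variables $h_H$, $v_V$ (one per maximal horizontal/vertical edge interval) and $w_1,\dots,w_r$, define $\varphi(x_a)=h_{H(a)}v_{V(a)}\prod_{k:a\in\mathcal{F}_k}w_k$; $J_{\mathcal{P}}=\ker\varphi$. A binomial $f$ in a binomial ideal $J$ is redundant if it can be expressed as a linear combination (with polynomial coefficients) of binomials in $J$ of lower degree. *)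

theory Defs
  imports Main "HOL-Library.Poly_Mapping"
begin

type_synonym vertex = "nat \<times> nat"
type_synonym cell = "nat \<times> nat"   (* the cell [a, a+(1,1)] is represented by a *)

(* monomials and polynomials of S = K[x_v | v \<in> V(P)] *)
type_synonym mono = "vertex \<Rightarrow>\<^sub>0 nat"
type_synonym 'a spoly = "mono \<Rightarrow>\<^sub>0 'a"

definition cell_vertices :: "cell \<Rightarrow> vertex set" where
  "cell_vertices a = {a, (fst a + 1, snd a), (fst a, snd a + 1), (fst a + 1, snd a + 1)}"

definition adj_cells :: "cell \<Rightarrow> cell \<Rightarrow> bool" where
  "adj_cells a b \<longleftrightarrow>
     (fst a = fst b \<and> (snd b = snd a + 1 \<or> snd a = snd b + 1)) \<or>
     (snd a = snd b \<and> (fst b = fst a + 1 \<or> fst a = fst b + 1))"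

definition cell_connected :: "cell set \<Rightarrow> bool" where
  "cell_connected C \<longleftrightarrow>
     (\<forall>a\<in>C. \<forall>b\<in>C. (\<lambda>x y. x \<in> C \<and> y \<in> C \<and> adj_cells x y)\<^sup>*\<^sup>* a b)"

definition polyomino :: "cell set \<Rightarrow> bool" where
  "polyomino P \<longleftrightarrow> finite P \<and> P \<noteq> {} \<and> cell_connected P"

definition poly_vertices :: "cell set \<Rightarrow> vertex set" where
  "poly_vertices P = (\<Union>a\<in>P. cell_vertices a)"

definition hole_cand :: "cell set \<Rightarrow> cell set \<Rightarrow> bool" where
  "hole_cand P H \<longleftrightarrow> finite H \<and> H \<noteq> {} \<and> H \<inter> P = {} \<and> cell_connected H"

definition is_hole :: "cell set \<Rightarrow> cell set \<Rightarrow> bool" where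
  "is_hole P H \<longleftrightarrow> hole_cand P H \<and> \<not> (\<exists>H'. hole_cand P H' \<and> H \<subset> H')"

definition lex_le :: "vertex \<Rightarrow> vertex \<Rightarrow> bool" where
  "lex_le a b \<longleftrightarrow> fst a < fst b \<or> (fst a = fst b \<and> snd a \<le> snd b)"

definition lower_left :: "cell set \<Rightarrow> vertex" where
  "lower_left H = (THE v. v \<in> (\<Union>a\<in>H. cell_vertices a) \<and>
                         (\<forall>w\<in>(\<Union>a\<in>H. cell_vertices a). lex_le v w))"

definition F_set :: "cell set \<Rightarrow> cell set \<Rightarrow> vertex set" where
  "F_set P H = {v \<in> poly_vertices P. fst v \<le> fst (lower_left H) \<and> snd v \<le> snd (lower_left H)}"

(* {(t,j),(t+1,j)} is an edge of a cell of P *)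
definition hedge :: "cell set \<Rightarrow> nat \<Rightarrow> nat \<Rightarrow> bool" where
  "hedge P t j \<longleftrightarrow> (t, j) \<in> P \<or> (j > 0 \<and> (t, j - 1) \<in> P)"

(* {(i,t),(i,t+1)} is an edge of a cell of P *)
definition vedge :: "cell set \<Rightarrow> nat \<Rightarrow> nat \<Rightarrow> bool" where
  "vedge P i t \<longleftrightarrow> (i, t) \<in> P \<or> (i > 0 \<and> (i - 1, t) \<in> P)"

definition horiz_interval :: "cell set \<Rightarrow> vertex set \<Rightarrow> bool" where
  "horiz_interval P I \<longleftrightarrow> (\<exists>i k j. i \<le> k \<and> I = {(t, j) | t. i \<le> t \<and> t \<le> k} \<and>
                                  (\<forall>t. i \<le> t \<and> t < k \<longrightarrow> hedge P t j))"

definition vert_interval :: "cell set \<Rightarrow> vertex set \<Rightarrow> bool" where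
  "vert_interval P I \<longleftrightarrow> (\<exists>j l i. j \<le> l \<and> I = {(i, t) | t. j \<le> t \<and> t \<le> l} \<and>
                                 (\<forall>t. j \<le> t \<and> t < l \<longrightarrow> vedge P i t))"

definition max_horiz_interval :: "cell set \<Rightarrow> vertex set \<Rightarrow> bool" where
  "max_horiz_interval P I \<longleftrightarrow> horiz_interval P I \<and> \<not> (\<exists>I'. horiz_interval P I' \<and> I \<subset> I')"

definition max_vert_interval :: "cell set \<Rightarrow> vertex set \<Rightarrow> bool" where
  "max_vert_interval P I \<longleftrightarrow> vert_interval P I \<and> \<not> (\<exists>I'. vert_interval P I' \<and> I \<subset> I')"

definition H_of :: "cell set \<Rightarrow> vertex \<Rightarrow> vertex set" where
  "H_of P a = (THE I. max_horiz_interval P I \<and> a \<in> I)"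

definition V_of :: "cell set \<Rightarrow> vertex \<Rightarrow> vertex set" where
  "V_of P a = (THE I. max_vert_interval P I \<and> a \<in> I)"

(* variables of the target ring: h_H, v_V (indexed by the maximal edge intervals) and
   w_k (indexed by the holes themselves) *)
datatype tvar = HVar "vertex set" | VVar "vertex set" | WVar "cell set"

(* exponent vector of phi(x_a) = h_{H(a)} v_{V(a)} prod_{k : a \<in> F_k} w_k *)
definition phi_exp :: "cell set \<Rightarrow> vertex \<Rightarrow> (tvar \<Rightarrow>\<^sub>0 nat)" where
  "phi_exp P a = Poly_Mapping.single (HVar (H_of P a)) 1 + Poly_Mapping.single (VVar (V_of P a)) 1
     + (\<Sum>H\<in>{H. is_hole P H \<and> a \<in> F_set P H}. Poly_Mapping.single (WVar H) 1)"

definition phi_mono :: "cell set \<Rightarrow> mono \<Rightarrow> (tvar \<Rightarrow>\<^sub>0 nat)" where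
  "phi_mono P m = (\<Sum>a\<in>Poly_Mapping.keys m. \<Sum>i<Poly_Mapping.lookup m a. phi_exp P a)"

definition phi :: "cell set \<Rightarrow> 'a::comm_ring_1 spoly \<Rightarrow> ((tvar \<Rightarrow>\<^sub>0 nat) \<Rightarrow>\<^sub>0 'a)" where
  "phi P f = (\<Sum>m\<in>Poly_Mapping.keys f. Poly_Mapping.single (phi_mono P m) (Poly_Mapping.lookup f m))"

definition in_S :: "cell set \<Rightarrow> 'a::zero spoly \<Rightarrow> bool" where
  "in_S P f \<longleftrightarrow> (\<forall>m\<in>Poly_Mapping.keys f. Poly_Mapping.keys m \<subseteq> poly_vertices P)"

definition toric_ideal :: "cell set \<Rightarrow> 'a::comm_ring_1 spoly set" where
  "toric_ideal P = {f. in_S P f \<and> phi P f = 0}"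

definition mono_deg :: "mono \<Rightarrow> nat" where
  "mono_deg m = (\<Sum>v\<in>Poly_Mapping.keys m. Poly_Mapping.lookup m v)"

(* total degree of a polynomial (0 for the zero polynomial) *)
definition poly_deg :: "'a::zero spoly \<Rightarrow> nat" where
  "poly_deg f = Max (insert 0 (mono_deg ` Poly_Mapping.keys f))"

definition monom :: "mono \<Rightarrow> 'a::{zero,one} spoly" where
  "monom m = Poly_Mapping.single m 1"

definition is_binomial :: "'a::comm_ring_1 spoly \<Rightarrow> bool" where
  "is_binomial g \<longleftrightarrow> (\<exists>u v. g = monom u - monom v)"

definition redundant :: "'a::comm_ring_1 spoly set \<Rightarrow> 'a spoly set \<Rightarrow> 'a spoly \<Rightarrow> bool" where
  "redundant Sring J f \<longleftrightarrow>
     (\<exists>gs :: ('a spoly \<times> 'a spoly) list.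
        (\<forall>(c, g)\<in>set gs. c \<in> Sring \<and> g \<in> J \<and> is_binomial g \<and> poly_deg g < poly_deg f) \<and>
        f = (\<Sum>(c, g)\<leftarrow>gs. c * g))"

definition inner_interval :: "cell set \<Rightarrow> vertex \<Rightarrow> vertex \<Rightarrow> bool" where
  "inner_interval P a b \<longleftrightarrow> fst a < fst b \<and> snd a < snd b \<and>
     (\<forall>c. fst a \<le> fst c \<and> fst c < fst b \<and> snd a \<le> snd c \<and> snd c < snd b \<longrightarrow> c \<in> P)"

end

theory Submission
  imports Defs
begin

text \<open>For an inner interval with diagonal corners \<open>a, b\<close> and anti-diagonal corners \<open>c, d\<close>,
  \<open>\<phi>(x\<^sub>a x\<^sub>b) = \<phi>(x\<^sub>c x\<^sub>d)\<close>: the bottom and top sides of the interval lie in maximal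
  horizontal edge intervals, the left and right sides in maximal vertical ones, and no hole
  has its lower left corner on a cell of the interval, so each \<open>w\<^sub>k\<close> occurs equally often
  on both sides. Hence if \<open>f\<^sup>+ = m x\<^sub>p x\<^sub>q\<close>, \<open>f\<^sup>- = n x\<^sub>r\<close> and \<open>s\<close> is the fourth corner,
  \<open>f = m (x\<^sub>p x\<^sub>q - x\<^sub>r x\<^sub>s) + x\<^sub>r (m x\<^sub>s - n)\<close> with both binomials in \<open>J\<^sub>P\<close> and of degree
  less than \<open>deg f\<close>, as \<open>deg f \<ge> 3\<close>.\<close>

subsection \<open>Monomials, binomials and the map \<open>\<phi>\<close>\<close>

lemma sum_lessThan_add_const:
  "(\<Sum>i<m + n. c) = (\<Sum>i<m. c) + (\<Sum>i<(n::nat). (c::'a::comm_monoid_add))"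
  by (induction n) (simp_all add: add.assoc)

lemma phi_mono_add: "phi_mono P (m + n) = phi_mono P m + phi_mono P n"
  unfolding phi_mono_def
  by (rule setsum_keys_plus_distrib) (simp_all add: sum_lessThan_add_const)

lemma phi_mono_single: "phi_mono P (Poly_Mapping.single a 1) = phi_exp P a"
  unfolding phi_mono_def by simp

lemma mono_deg_add: "mono_deg (m + n) = mono_deg m + mono_deg n"
  unfolding mono_deg_def by (rule setsum_keys_plus_distrib) simp_all

lemma mono_deg_single: "mono_deg (Poly_Mapping.single a 1) = 1"
  unfolding mono_deg_def by simp

lemma keys_add_nat: "Poly_Mapping.keys (m + n :: 'b \<Rightarrow>\<^sub>0 nat) = Poly_Mapping.keys m \<union> Poly_Mapping.keys n"
  by (auto simp: in_keys_iff lookup_add)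

lemma monom_split_single:
  fixes m :: mono
  assumes "v \<in> Poly_Mapping.keys m"
  obtains m' where "m = m' + Poly_Mapping.single v 1"
proof
  show "m = (m - Poly_Mapping.single v 1) + Poly_Mapping.single v 1"
    using assms by (intro poly_mapping_eqI) (auto simp: in_keys_iff lookup_add lookup_minus lookup_single when_def)
qed

lemma monom_split_two:
  fixes m :: mono
  assumes "p \<in> Poly_Mapping.keys m" "q \<in> Poly_Mapping.keys m" "p \<noteq> q"
  obtains m' where "m = m' + (Poly_Mapping.single p 1 + Poly_Mapping.single q 1)"
proof -
  obtain m1 where m1: "m = m1 + Poly_Mapping.single p 1"
    using assms(1) by (rule monom_split_single)
  have "q \<in> Poly_Mapping.keys m1"
    using assms(2,3) unfolding m1 by (simp add: in_keys_iff lookup_add lookup_single)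
  then obtain m2 where "m1 = m2 + Poly_Mapping.single q 1"
    by (rule monom_split_single)
  with m1 have "m = m2 + (Poly_Mapping.single p 1 + Poly_Mapping.single q 1)"
    by (simp add: ac_simps)
  then show thesis
    by (rule that)
qed

lemma monom_mult: "(monom a :: 'a::comm_ring_1 spoly) * monom b = monom (a + b)"
  by (simp add: monom_def mult_single)

lemma keys_monom_diff:
  "a \<noteq> b \<Longrightarrow> Poly_Mapping.keys (monom a - monom b :: 'a::comm_ring_1 spoly) = {a, b}"
  by (auto simp: monom_def in_keys_iff lookup_minus lookup_single)

lemma keys_monom_diff_subset:
  "Poly_Mapping.keys (monom a - monom b :: 'a::comm_ring_1 spoly) \<subseteq> {a, b}"
  by (cases "a = b") (auto simp: keys_monom_diff)

lemma phi_monom_diff_eq_0_iff: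
  "phi P (monom a - monom b :: 'a::comm_ring_1 spoly) = 0 \<longleftrightarrow> phi_mono P a = phi_mono P b"
proof (cases "a = b")
  case False
  have "phi P (monom a - monom b :: 'a spoly) =
      Poly_Mapping.single (phi_mono P a) 1 - Poly_Mapping.single (phi_mono P b) 1"
    using False unfolding phi_def keys_monom_diff[OF False]
    by (simp add: False[symmetric] monom_def lookup_minus lookup_single single_uminus)
  moreover have "Poly_Mapping.single x (1::'a) = Poly_Mapping.single y 1 \<longleftrightarrow> x = y" for x y
    by (metis lookup_single_eq lookup_single_not_eq zero_neq_one)
  ultimately show ?thesis by simp
qed (simp add: phi_def)

lemma monom_diff_in_toric_ideal:
  assumes "Poly_Mapping.keys a \<subseteq> poly_vertices P" "Poly_Mapping.keys b \<subseteq> poly_vertices P"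
    and "phi_mono P a = phi_mono P b"
  shows "(monom a - monom b :: 'a::comm_ring_1 spoly) \<in> toric_ideal P"
  using assms keys_monom_diff_subset[of a b]
  unfolding toric_ideal_def in_S_def by (auto simp: phi_monom_diff_eq_0_iff)

lemma poly_deg_monom_diff_le:
  "poly_deg (monom a - monom b :: 'a::comm_ring_1 spoly) \<le> max (mono_deg a) (mono_deg b)"
  using keys_monom_diff_subset[of a b] unfolding poly_deg_def by auto

lemma poly_deg_monom_diff:
  "a \<noteq> b \<Longrightarrow> poly_deg (monom a - monom b :: 'a::comm_ring_1 spoly) = max (mono_deg a) (mono_deg b)"
  by (simp add: poly_deg_def keys_monom_diff)

lemma redundant_by_lower_binomial:
  fixes u' w' a c d :: mono and f :: "'a::comm_ring_1 spoly"
  assumes f: "f = monom (u' + a) - monom (w' + c)" "f \<in> toric_ideal P"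
    and keys: "Poly_Mapping.keys (u' + a) \<subseteq> poly_vertices P"
      "Poly_Mapping.keys (w' + c) \<subseteq> poly_vertices P" "Poly_Mapping.keys d \<subseteq> poly_vertices P"
    and phi_a: "phi_mono P a = phi_mono P (c + d)"
    and deg: "mono_deg a < poly_deg f" "mono_deg (c + d) < poly_deg f"
      "mono_deg d < mono_deg a" "0 < mono_deg c"
  shows "redundant {g. in_S P g} (toric_ideal P) f"
proof -
  define g1 :: "'a spoly" where "g1 = monom a - monom (c + d)"
  define g2 :: "'a spoly" where "g2 = monom (u' + d) - monom w'"
  have "u' + a \<noteq> w' + c"
    using f(1) deg(1) by (auto simp: poly_deg_def)
  then have deg_f: "poly_deg f = max (mono_deg (u' + a)) (mono_deg (w' + c))"
    using f(1) poly_deg_monom_diff by blast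
  have "phi_mono P (u' + a) = phi_mono P (w' + c)"
    using f unfolding toric_ideal_def by (simp add: phi_monom_diff_eq_0_iff)
  then have "phi_mono P (u' + d) + phi_mono P c = phi_mono P w' + phi_mono P c"
    using phi_a by (simp add: phi_mono_add ac_simps)
  then have "phi_mono P (u' + d) = phi_mono P w'"
    by simp
  then have g2_J: "g2 \<in> toric_ideal P"
    unfolding g2_def using keys by (intro monom_diff_in_toric_ideal) (auto simp: keys_add_nat)
  have g1_J: "g1 \<in> toric_ideal P"
    unfolding g1_def using keys phi_a by (intro monom_diff_in_toric_ideal) (auto simp: keys_add_nat)
  have "poly_deg g1 < poly_deg f"
    using poly_deg_monom_diff_le[of a "c + d", where 'a='a] deg unfolding g1_def by linarith
  moreover have "poly_deg g2 < poly_deg f"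
    using poly_deg_monom_diff_le[of "u' + d" w', where 'a='a] deg deg_f
    unfolding g2_def by (simp add: mono_deg_add)
  moreover have "in_S P (monom u' :: 'a spoly)" "in_S P (monom c :: 'a spoly)"
    using keys by (auto simp: in_S_def monom_def keys_add_nat)
  moreover have "f = monom u' * g1 + monom c * g2"
    unfolding f(1) g1_def g2_def by (simp add: right_diff_distrib monom_mult ac_simps)
  ultimately show ?thesis
    unfolding redundant_def is_binomial_def
    using g1_J g2_J g1_def g2_def by (intro exI[of _ "[(monom u', g1), (monom c, g2)]"]) auto
qed

subsection \<open>Maximal edge intervals\<close>

lemma horiz_interval_Un:
  assumes "horiz_interval P I" "horiz_interval P I'" "I \<inter> I' \<noteq> {}"
  shows "horiz_interval P (I \<union> I')"
proof -
  obtain i k j where I: "i \<le> k" "I = {(t, j) | t. i \<le> t \<and> t \<le> k}" "\<forall>t. i \<le> t \<and> t < k \<longrightarrow> hedge P t j"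
    using assms(1) unfolding horiz_interval_def by blast
  obtain i' k' j' where I': "i' \<le> k'" "I' = {(t, j') | t. i' \<le> t \<and> t \<le> k'}"
      "\<forall>t. i' \<le> t \<and> t < k' \<longrightarrow> hedge P t j'"
    using assms(2) unfolding horiz_interval_def by blast
  obtain t0 where "i \<le> t0" "t0 \<le> k" "i' \<le> t0" "t0 \<le> k'" "j' = j"
    using assms(3) unfolding I(2) I'(2) by auto
  note t0 = this
  have "\<forall>t. min i i' \<le> t \<and> t < max k k' \<longrightarrow> hedge P t j"
  proof (intro allI impI)
    fix t assume "min i i' \<le> t \<and> t < max k k'"
    with t0 have "i \<le> t \<and> t < k \<or> i' \<le> t \<and> t < k'"
      by (cases "t < t0") auto
    then show "hedge P t j"
      using I(3) I'(3) t0 by auto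
  qed
  moreover have "I \<union> I' = {(t, j) | t. min i i' \<le> t \<and> t \<le> max k k'}"
  proof -
    have "i \<le> t \<and> t \<le> k \<or> i' \<le> t \<and> t \<le> k' \<longleftrightarrow> min i i' \<le> t \<and> t \<le> max k k'" for t
      using t0 by (cases "t < t0") auto
    then show ?thesis
      unfolding I(2) I'(2) \<open>j' = j\<close> by blast
  qed
  moreover have "min i i' \<le> max k k'"
    using I(1) by linarith
  ultimately show ?thesis
    unfolding horiz_interval_def by blast
qed

lemma vert_interval_Un:
  assumes "vert_interval P I" "vert_interval P I'" "I \<inter> I' \<noteq> {}"
  shows "vert_interval P (I \<union> I')"
proof -
  obtain j l i where I: "j \<le> l" "I = {(i, t) | t. j \<le> t \<and> t \<le> l}" "\<forall>t. j \<le> t \<and> t < l \<longrightarrow> vedge P i t"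
    using assms(1) unfolding vert_interval_def by blast
  obtain j' l' i' where I': "j' \<le> l'" "I' = {(i', t) | t. j' \<le> t \<and> t \<le> l'}"
      "\<forall>t. j' \<le> t \<and> t < l' \<longrightarrow> vedge P i' t"
    using assms(2) unfolding vert_interval_def by blast
  obtain t0 where "j \<le> t0" "t0 \<le> l" "j' \<le> t0" "t0 \<le> l'" "i' = i"
    using assms(3) unfolding I(2) I'(2) by auto
  note t0 = this
  have "\<forall>t. min j j' \<le> t \<and> t < max l l' \<longrightarrow> vedge P i t"
  proof (intro allI impI)
    fix t assume "min j j' \<le> t \<and> t < max l l'"
    with t0 have "j \<le> t \<and> t < l \<or> j' \<le> t \<and> t < l'"
      by (cases "t < t0") auto
    then show "vedge P i t"
      using I(3) I'(3) t0 by auto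
  qed
  moreover have "I \<union> I' = {(i, t) | t. min j j' \<le> t \<and> t \<le> max l l'}"
  proof -
    have "j \<le> t \<and> t \<le> l \<or> j' \<le> t \<and> t \<le> l' \<longleftrightarrow> min j j' \<le> t \<and> t \<le> max l l'" for t
      using t0 by (cases "t < t0") auto
    then show ?thesis
      unfolding I(2) I'(2) \<open>i' = i\<close> by blast
  qed
  moreover have "min j j' \<le> max l l'"
    using I(1) by linarith
  ultimately show ?thesis
    unfolding vert_interval_def by blast
qed

lemma H_of_eq_if_horiz_interval:
  assumes "horiz_interval P I" "a \<in> I" "b \<in> I"
  shows "H_of P a = H_of P b"
proof -
  have "I \<subseteq> M" if "max_horiz_interval P M" "I \<inter> M \<noteq> {}" for M
    using that horiz_interval_Un[OF assms(1), of M] unfolding max_horiz_interval_def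
    by (metis Un_upper2 sup.absorb_iff2 psubsetI sup_commute)
  then have "max_horiz_interval P M \<and> a \<in> M \<longleftrightarrow> max_horiz_interval P M \<and> b \<in> M" for M
    using assms(2,3) by blast
  then show ?thesis
    unfolding H_of_def by simp
qed

lemma V_of_eq_if_vert_interval:
  assumes "vert_interval P I" "a \<in> I" "b \<in> I"
  shows "V_of P a = V_of P b"
proof -
  have "I \<subseteq> M" if "max_vert_interval P M" "I \<inter> M \<noteq> {}" for M
    using that vert_interval_Un[OF assms(1), of M] unfolding max_vert_interval_def
    by (metis Un_upper2 sup.absorb_iff2 psubsetI sup_commute)
  then have "max_vert_interval P M \<and> a \<in> M \<longleftrightarrow> max_vert_interval P M \<and> b \<in> M" for M
    using assms(2,3) by blast
  then show ?thesis
    unfolding V_of_def by simp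
qed

subsection \<open>Holes\<close>

text \<open>Cells and vertices are both pairs: the least vertex of \<open>H\<close> is the lower left vertex of
  its lexicographically least cell, and so is itself a cell of \<open>H\<close>.\<close>

lemma lower_left_in:
  assumes "finite H" "H \<noteq> {}"
  shows "lower_left H \<in> H"
proof -
  define X where "X = Min (fst ` H)"
  define Y where "Y = Min (snd ` {c \<in> H. fst c = X})"
  have "X \<in> fst ` H" "\<forall>c\<in>H. X \<le> fst c"
    using assms unfolding X_def by auto
  moreover have "{c \<in> H. fst c = X} \<noteq> {}"
    using \<open>X \<in> fst ` H\<close> by auto
  then have "Y \<in> snd ` {c \<in> H. fst c = X}" "\<forall>c\<in>H. fst c = X \<longrightarrow> Y \<le> snd c"
    using assms(1) unfolding Y_def by auto
  ultimately have XY: "(X, Y) \<in> H" "\<forall>c\<in>H. lex_le (X, Y) c"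
    unfolding lex_le_def by (force, fastforce simp: le_less)
  let ?VS = "\<Union>a\<in>H. cell_vertices a"
  have least: "(X, Y) \<in> ?VS \<and> (\<forall>w\<in>?VS. lex_le (X, Y) w)"
    using XY unfolding cell_vertices_def lex_le_def by fastforce
  have "lower_left H = (X, Y)"
    unfolding lower_left_def
  proof (rule the_equality)
    show "(X, Y) \<in> ?VS \<and> (\<forall>w\<in>?VS. lex_le (X, Y) w)"
      by (fact least)
  next
    fix v assume "v \<in> ?VS \<and> (\<forall>w\<in>?VS. lex_le v w)"
    with least show "v = (X, Y)"
      unfolding lex_le_def by (cases v) fastforce
  qed
  with XY show ?thesis by simp
qed

lemma adj_cells_sym: "adj_cells a b \<Longrightarrow> adj_cells b a"
  unfolding adj_cells_def by auto

lemma cell_connected_insert: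
  assumes conn: "cell_connected C" and "c \<in> C" "adj_cells c d"
  shows "cell_connected (insert d C)"
proof -
  let ?R = "\<lambda>x y. x \<in> insert d C \<and> y \<in> insert d C \<and> adj_cells x y"
  have in_C: "?R\<^sup>*\<^sup>* a b" if "a \<in> C" "b \<in> C" for a b
    using conn that unfolding cell_connected_def
    by (auto elim!: mono_rtranclp[rule_format, rotated])
  have "?R\<^sup>*\<^sup>* a c" if "a \<in> insert d C" for a
    using that in_C[of a c] assms(2,3) by (auto intro: r_into_rtranclp adj_cells_sym)
  moreover have "?R\<^sup>*\<^sup>* c b" if "b \<in> insert d C" for b
    using that in_C[of c b] assms(2,3) by (auto intro: r_into_rtranclp)
  ultimately show ?thesis
    unfolding cell_connected_def by (meson rtranclp_trans)
qed

lemma hole_adj_closed: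
  assumes hole: "is_hole P H" and "c \<in> H" "d \<notin> P" "adj_cells c d"
  shows "d \<in> H"
proof (rule ccontr)
  assume "d \<notin> H"
  then have "H \<subset> insert d H" by auto
  moreover have "hole_cand P (insert d H)"
    using hole assms(2-4) cell_connected_insert
    unfolding is_hole_def hole_cand_def by auto
  ultimately show False
    using hole unfolding is_hole_def by blast
qed

lemma hole_contains_path:
  assumes "is_hole P H" "g 0 \<in> H" "\<And>n. adj_cells (g n) (g (Suc n))" "\<And>n. g n \<notin> P"
  shows "g n \<in> H"
  by (induction n) (use assms hole_adj_closed in blast)+

text \<open>A hole beyond the bounding box of \<open>P\<close> would contain an infinite straight path.\<close>

lemma hole_bounded:
  assumes "finite P" "is_hole P H" "c \<in> H"
  shows "fst c \<le> Max (fst ` P)" "snd c \<le> Max (snd ` P)"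
proof -
  have no_ray: False if "inj g" "g 0 = c" "\<And>n. adj_cells (g n) (g (Suc n))" "\<And>n. g n \<notin> P"
    for g :: "nat \<Rightarrow> cell"
  proof -
    have "range g \<subseteq> H"
      using hole_contains_path[OF assms(2)] that assms(3) by blast
    moreover have "finite H"
      using assms(2) unfolding is_hole_def hole_cand_def by blast
    ultimately show False
      using \<open>inj g\<close> finite_imageD finite_subset by (metis infinite_UNIV_nat)
  qed
  have Max_bounds: "fst x \<le> Max (fst ` P)" "snd x \<le> Max (snd ` P)" if "x \<in> P" for x
    using assms(1) that by simp_all
  show "fst c \<le> Max (fst ` P)"
  proof (rule ccontr)
    assume "\<not> ?thesis"
    then show False
      by (intro no_ray[of "\<lambda>n. (fst c + n, snd c)"]) (auto simp: inj_def adj_cells_def dest: Max_bounds)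
  qed
  show "snd c \<le> Max (snd ` P)"
  proof (rule ccontr)
    assume "\<not> ?thesis"
    then show False
      by (intro no_ray[of "\<lambda>n. (fst c, snd c + n)"]) (auto simp: inj_def adj_cells_def dest: Max_bounds)
  qed
qed

lemma finite_holes:
  assumes "finite P"
  shows "finite {H. is_hole P H}"
proof (rule finite_subset)
  show "{H. is_hole P H} \<subseteq> Pow ({0..Max (fst ` P)} \<times> {0..Max (snd ` P)})"
    using hole_bounded[OF assms] by (auto simp: mem_Times_iff)
qed simp

subsection \<open>Inner intervals\<close>

lemma inner_interval_cell:
  "inner_interval P (i, j) (k, l) \<Longrightarrow> i \<le> a \<Longrightarrow> a < k \<Longrightarrow> j \<le> b \<Longrightarrow> b < l \<Longrightarrow> (a, b) \<in> P"
  unfolding inner_interval_def by auto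

lemma inner_interval_corners_in_vertices:
  assumes "inner_interval P (i, j) (k, l)"
  shows "{(i, j), (k, l), (i, l), (k, j)} \<subseteq> poly_vertices P"
proof -
  have "i < k" "j < l"
    using assms unfolding inner_interval_def by auto
  then have "(i, j) \<in> P" "(k - 1, l - 1) \<in> P" "(i, l - 1) \<in> P" "(k - 1, j) \<in> P"
    by (auto intro: inner_interval_cell[OF assms])
  moreover have "(i, j) \<in> cell_vertices (i, j)" "(k, l) \<in> cell_vertices (k - 1, l - 1)"
    "(i, l) \<in> cell_vertices (i, l - 1)" "(k, j) \<in> cell_vertices (k - 1, j)"
    using \<open>i < k\<close> \<open>j < l\<close> by (auto simp: cell_vertices_def)
  ultimately show ?thesis
    unfolding poly_vertices_def by blast
qed

lemma inner_interval_horiz_side: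
  assumes "inner_interval P (i, j) (k, l)" "y \<in> {j, l}"
  shows "horiz_interval P {(t, y) | t. i \<le> t \<and> t \<le> k}"
  using assms unfolding horiz_interval_def hedge_def inner_interval_def
  by (intro exI[of _ i] exI[of _ k] exI[of _ y]) auto

lemma inner_interval_vert_side:
  assumes "inner_interval P (i, j) (k, l)" "x \<in> {i, k}"
  shows "vert_interval P {(x, t) | t. j \<le> t \<and> t \<le> l}"
  using assms unfolding vert_interval_def vedge_def inner_interval_def
  by (intro exI[of _ j] exI[of _ l] exI[of _ x]) auto

definition holes_at :: "cell set \<Rightarrow> vertex \<Rightarrow> cell set set" where
  "holes_at P a = {H. is_hole P H \<and> a \<in> F_set P H}"

lemma phi_exp_holes_at:
  "phi_exp P a = Poly_Mapping.single (HVar (H_of P a)) 1 + Poly_Mapping.single (VVar (V_of P a)) 1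
     + (\<Sum>H\<in>holes_at P a. Poly_Mapping.single (WVar H) 1)"
  unfolding phi_exp_def holes_at_def ..

lemma inner_interval_holes_at:
  assumes "inner_interval P (i, j) (k, l)"
  shows "holes_at P (i, j) = holes_at P (i, l) \<union> holes_at P (k, j)"
    and "holes_at P (k, l) = holes_at P (i, l) \<inter> holes_at P (k, j)"
proof -
  have "lower_left H \<in> H" if "is_hole P H" for H
    using that lower_left_in unfolding is_hole_def hole_cand_def by blast
  then have "\<forall>H. is_hole P H \<longrightarrow> i \<le> fst (lower_left H) \<longrightarrow> j \<le> snd (lower_left H) \<longrightarrow>
      k \<le> fst (lower_left H) \<or> l \<le> snd (lower_left H)"
    using inner_interval_cell[OF assms] unfolding is_hole_def hole_cand_def
    by (metis disjoint_iff not_le prod.collapse)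
  moreover have "i < k" "j < l"
    using assms unfolding inner_interval_def by auto
  ultimately show "holes_at P (i, j) = holes_at P (i, l) \<union> holes_at P (k, j)"
    and "holes_at P (k, l) = holes_at P (i, l) \<inter> holes_at P (k, j)"
    using inner_interval_corners_in_vertices[OF assms]
    unfolding holes_at_def F_set_def by auto
qed

lemma phi_exp_inner_interval_corners:
  assumes inner: "inner_interval P (i, j) (k, l)" and "finite P"
  shows "phi_exp P (i, j) + phi_exp P (k, l) = phi_exp P (i, l) + phi_exp P (k, j)"
proof -
  have "i < k" "j < l"
    using inner unfolding inner_interval_def by auto
  then have H: "H_of P (i, y) = H_of P (k, y)" if "y \<in> {j, l}" for y
    by (intro H_of_eq_if_horiz_interval[OF inner_interval_horiz_side[OF inner that]]) auto
  have V: "V_of P (x, j) = V_of P (x, l)" if "x \<in> {i, k}" for x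
    using \<open>j < l\<close> by (intro V_of_eq_if_vert_interval[OF inner_interval_vert_side[OF inner that]]) auto
  define w where "w a = (\<Sum>H\<in>holes_at P a. Poly_Mapping.single (WVar H) (1::nat))" for a
  have fin: "finite (holes_at P a)" for a
    using finite_holes[OF \<open>finite P\<close>] unfolding holes_at_def by (rule finite_subset[rotated]) auto
  have W: "w (i, j) + w (k, l) = w (i, l) + w (k, j)"
    unfolding w_def inner_interval_holes_at[OF inner] by (intro sum.union_inter fin)
  define hv where "hv = Poly_Mapping.single (HVar (H_of P (k, j))) (1::nat)
     + Poly_Mapping.single (VVar (V_of P (i, l))) 1
     + Poly_Mapping.single (HVar (H_of P (k, l))) 1 + Poly_Mapping.single (VVar (V_of P (k, l))) 1"
  have "phi_exp P (i, j) + phi_exp P (k, l) = hv + (w (i, j) + w (k, l))"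
    by (simp add: phi_exp_holes_at H V hv_def w_def ac_simps)
  also have "\<dots> = hv + (w (i, l) + w (k, j))"
    by (simp only: W)
  also have "\<dots> = phi_exp P (i, l) + phi_exp P (k, j)"
    by (simp add: phi_exp_holes_at H V hv_def w_def ac_simps)
  finally show ?thesis .
qed

lemma inner_interval_fourth_corner:
  assumes "inner_interval P (i, j) (k, l)" "finite P"
    and "({p, q} = {(i, j), (k, l)} \<and> r \<in> {(i, l), (k, j)}) \<or>
         ({p, q} = {(i, l), (k, j)} \<and> r \<in> {(i, j), (k, l)})"
  obtains s where "s \<in> poly_vertices P" "p \<noteq> q"
    "phi_exp P p + phi_exp P q = phi_exp P r + phi_exp P s"
proof -
  let ?D = "{(i, j), (k, l)}" and ?A = "{(i, l), (k, j)}"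
  have "i < k" "j < l"
    using assms(1) unfolding inner_interval_def by auto
  then have "card ?D = 2" "card ?A = 2" "sum (phi_exp P) ?D = sum (phi_exp P) ?A"
    using phi_exp_inner_interval_corners[OF assms(1,2)] by auto
  moreover have "?D \<subseteq> poly_vertices P" "?A \<subseteq> poly_vertices P"
    using inner_interval_corners_in_vertices[OF assms(1)] by auto
  ultimately obtain X Y where XY: "{p, q} = X" "r \<in> Y" "card X = 2" "card Y = 2"
      "sum (phi_exp P) X = sum (phi_exp P) Y" "Y \<subseteq> poly_vertices P"
    using assms(3) by (metis (no_types, lifting))
  then obtain s where "Y = {r, s}" "r \<noteq> s"
    by (auto simp: card_2_iff)
  moreover have "p \<noteq> q"
    using XY(1,3) by auto
  ultimately show thesis
    using XY that[of s] by auto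
qed

theorem lemma4p2:
  fixes P :: "cell set" and u w :: mono and f :: "'a::field spoly"
  assumes "polyomino P"
    and "Poly_Mapping.keys u \<subseteq> poly_vertices P" and "Poly_Mapping.keys w \<subseteq> poly_vertices P"
    and "f = monom u - monom w"
    and "f \<in> toric_ideal P"
    and "poly_deg f \<ge> 3"
    and "p \<in> Poly_Mapping.keys u" and "q \<in> Poly_Mapping.keys u" and "r \<in> Poly_Mapping.keys w"
    and "\<exists>i j k l. inner_interval P (i, j) (k, l) \<and>
           (({p, q} = {(i, j), (k, l)} \<and> r \<in> {(i, l), (k, j)}) \<or>
            ({p, q} = {(i, l), (k, j)} \<and> r \<in> {(i, j), (k, l)}))"
  shows "redundant {g. in_S P g} (toric_ideal P) f"
proof -
  have "finite P"
    using assms(1) unfolding polyomino_def by simp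
  then obtain s where s: "s \<in> poly_vertices P" "p \<noteq> q"
      "phi_exp P p + phi_exp P q = phi_exp P r + phi_exp P s"
    using assms(10) inner_interval_fourth_corner by metis
  define a where "a = Poly_Mapping.single p 1 + Poly_Mapping.single q (1::nat)"
  define c where "c = Poly_Mapping.single r (1::nat)"
  define d where "d = Poly_Mapping.single s (1::nat)"
  obtain u' where u: "u = u' + a"
    using monom_split_two[OF assms(7,8) s(2)] unfolding a_def .
  obtain w' where w: "w = w' + c"
    using monom_split_single[OF assms(9)] unfolding c_def .
  have "phi_mono P a = phi_mono P (c + d)"
    using s(3) unfolding a_def c_def d_def phi_mono_add phi_mono_single .
  moreover have "mono_deg a = 2" "mono_deg c = 1" "mono_deg d = 1"
    unfolding a_def c_def d_def mono_deg_add mono_deg_single by simp_all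
  moreover have "Poly_Mapping.keys d \<subseteq> poly_vertices P"
    using s(1) by (simp add: d_def)
  ultimately show ?thesis
    using assms(2-6) u w
    by (intro redundant_by_lower_binomial[where a = a and c = c and d = d]) (auto simp: mono_deg_add)
qed

end
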